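(* Let $p$ be a prime, $n=rk$, let $h:\mathbb{F}_{p^k}\to\mathbb{F}_{p^k}$ be an arbitrary mapping, and let $\gamma\in\mathbb{F}_{p^n}^*$ be an $(i,b)$-Frobenius translator of $f:\mathbb{F}_{p^n}\to\mathbb{F}_{p^k}$ (with $b\in\mathbb{F}_{p^k}$, $i\in\{0,\dots,k-1\}$). Let $L:\mathbb{F}_{p^n}\to\mathbb{F}_{p^n}$ be an $\mathbb{F}_{p^k}$-linear permutation. Then the mapping $$G(x)=L(x)^{p^i}+L(\gamma)^{p^i}\,h(f(x))$$ permutes $\mathbb{F}_{p^n}$ if and only if the mapping $g(u)=u+bh(u)$ permutes $\mathbb{F}_{p^k}$.
   Context: For $n=rk$, a function $f:\mathbb{F}_{p^n}\to\mathbb{F}_{p^k}$, an element $\gamma\in\mathbb{F}_{p^n}^*$, an element $b\in\mathbb{F}_{p^k}$ and $i\in\{0,\dots,k-1\}$, $\gamma$ is called an $(i,b)$-Frobenius translator of $f$ if $f(x+u\gamma)-f(x)=u^{p^i}b$ for all $x\in\mathbb{F}_{p^n}$ and all $u\in\mathbb{F}_{p^k}$. An $\mathbb{F}_{p^k}$-linear function on $\mathbb{F}_{p^n}$ is one of the form $L(x)=\sum_{j=0}^{r-1}\lambda_j x^{p^{kj}}$ with $\lambda_j\in\mathbb{F}_{p^n}$. *)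

theory Defs
  imports "HOL-Computational_Algebra.Primes"
begin

text \<open>The finite field F_{p^n} is modelled as a finite field type 'a with CARD('a) = p^n.
  The subfield F_{p^k} (for k dividing n) is the set of fixed points of x \<mapsto> x^(p^k).\<close>

definition subfield_pk :: "nat \<Rightarrow> nat \<Rightarrow> ('a::{field,finite}) set" where
  "subfield_pk p k = {x. x ^ (p ^ k) = x}"

definition frobenius_translator ::
  "nat \<Rightarrow> nat \<Rightarrow> ('a::{field,finite} \<Rightarrow> 'a) \<Rightarrow> 'a \<Rightarrow> nat \<Rightarrow> 'a \<Rightarrow> bool" where
  "frobenius_translator p k f \<gamma> i b \<longleftrightarrow>
     \<gamma> \<noteq> 0 \<and> b \<in> subfield_pk p k \<and> i < k \<and>
     (\<forall>x u. u \<in> subfield_pk p k \<longrightarrow> f (x + u * \<gamma>) - f x = u ^ (p ^ i) * b)"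

text \<open>F_{p^k}-linear functions on F_{p^n}, n = r k.\<close>
definition Fpk_linear :: "nat \<Rightarrow> nat \<Rightarrow> nat \<Rightarrow> ('a::{field,finite} \<Rightarrow> 'a) \<Rightarrow> bool" where
  "Fpk_linear p k r L \<longleftrightarrow>
     (\<exists>lam :: nat \<Rightarrow> 'a. \<forall>x. L x = (\<Sum>j<r. lam j * x ^ (p ^ (k * j))))"

end

theory Submission
  imports Defs "HOL-Number_Theory.Residues"
begin

text \<open>Choose \<open>\<psi>\<close> on \<open>F_{p^k}\<close> with \<open>\<psi>(u)^(p^i) = h(u)\<close> and put
  \<open>F(x) = x + \<psi>(f(x)) \<gamma>\<close>. Linearity of \<open>L\<close> over \<open>F_{p^k}\<close> and additivity of
  Frobenius give \<open>G(x) = L(F(x))^(p^i)\<close>, so \<open>G\<close> permutes iff \<open>F\<close> does. The translator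
  property gives \<open>f(F(x)) = g(f(x))\<close>; since \<open>F\<close> moves \<open>x\<close> by a multiple of \<open>\<gamma>\<close>
  determined by \<open>f(x)\<close>, \<open>F\<close> is injective iff \<open>g\<close> is injective on \<open>F_{p^k}\<close>. For
  surjectivity of \<open>g\<close>, note that \<open>f\<close> maps the line \<open>F_{p^k} \<gamma>\<close> onto \<open>F_{p^k}\<close>
  when \<open>b \<noteq> 0\<close> (and \<open>g\<close> is the identity when \<open>b = 0\<close>).\<close>

lemma prime_CHAR_finite_field: "prime CHAR('a::{field,finite})"
  by (rule prime_CHAR_semidom, rule finite_imp_CHAR_pos) simp

lemma CHAR_eq_if_card_eq_prime_power:
  assumes "prime p" "card (UNIV :: 'a::{field,finite} set) = p ^ m"
  shows "CHAR('a) = p"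
proof -
  have "CHAR('a) dvd p ^ m" using CHAR_dvd_CARD[where 'a='a] assms(2) by simp
  hence "CHAR('a) dvd p" using prime_CHAR_finite_field prime_dvd_power by blast
  thus ?thesis using prime_CHAR_finite_field assms(1) primes_dvd_imp_eq by blast
qed

lemma frobenius_diff:
  fixes x y :: "'a::comm_ring_1"
  assumes "prime CHAR('a)"
  shows "(x - y) ^ (CHAR('a) ^ m) = x ^ (CHAR('a) ^ m) - y ^ (CHAR('a) ^ m)"
proof -
  have "x ^ (CHAR('a) ^ m) = ((x - y) + y) ^ (CHAR('a) ^ m)" by simp
  also have "\<dots> = (x - y) ^ (CHAR('a) ^ m) + y ^ (CHAR('a) ^ m)"
    using freshmans_dream'[OF assms] by blast
  finally show ?thesis by simp
qed

lemma inj_frobenius: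
  assumes "prime CHAR('a::idom)"
  shows "inj (\<lambda>x::'a. x ^ (CHAR('a) ^ m))"
proof (rule injI)
  fix x y :: 'a assume "x ^ (CHAR('a) ^ m) = y ^ (CHAR('a) ^ m)"
  hence "(x - y) ^ (CHAR('a) ^ m) = 0" using frobenius_diff[OF assms] by simp
  thus "x = y" by simp
qed

lemma bij_frobenius: "bij (\<lambda>x::'a::{field,finite}. x ^ (CHAR('a) ^ m))"
  using inj_frobenius[OF prime_CHAR_finite_field[where 'a='a], of m]
    finite_UNIV_inj_surj[OF finite_UNIV] by (simp add: bij_def)

lemma bij_comp_iff_inj:
  fixes F g :: "'a::finite \<Rightarrow> 'a"
  assumes "bij g"
  shows "bij (\<lambda>x. g (F x)) \<longleftrightarrow> inj F"
proof -
  have "bij (\<lambda>x. g (F x)) \<longleftrightarrow> inj (g \<circ> F)"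
    using finite_UNIV_inj_surj[OF finite_UNIV, of "g \<circ> F"] by (auto simp: bij_def comp_def)
  also have "\<dots> \<longleftrightarrow> inj F"
    using inj_on_imageI2[of g F] inj_compose[OF bij_is_inj[OF assms], of F] by blast
  finally show ?thesis .
qed

context
  fixes p k :: nat
  assumes CHAR_eq: "CHAR('a::{field,finite}) = p"
begin

lemma subfield_pk_add:
  "(x::'a) \<in> subfield_pk p k \<Longrightarrow> y \<in> subfield_pk p k \<Longrightarrow> x + y \<in> subfield_pk p k"
  using freshmans_dream'[OF prime_CHAR_finite_field, of "p ^ k" k x y] CHAR_eq
  by (simp add: subfield_pk_def)

lemma subfield_pk_diff:
  "(x::'a) \<in> subfield_pk p k \<Longrightarrow> y \<in> subfield_pk p k \<Longrightarrow> x - y \<in> subfield_pk p k"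
  using frobenius_diff[OF prime_CHAR_finite_field, of x y k] CHAR_eq
  by (simp add: subfield_pk_def)

lemma frobenius_image_subfield_pk:
  "(\<lambda>x::'a. x ^ (p ^ i)) ` subfield_pk p k = subfield_pk p k"
proof (rule endo_inj_surj)
  show "(\<lambda>x::'a. x ^ (p ^ i)) ` subfield_pk p k \<subseteq> subfield_pk p k"
  proof (clarsimp simp: subfield_pk_def)
    fix x :: 'a assume "x ^ p ^ k = x"
    then show "(x ^ p ^ i) ^ p ^ k = x ^ p ^ i" by (metis power_mult mult.commute)
  qed
  show "inj_on (\<lambda>x::'a. x ^ (p ^ i)) (subfield_pk p k)"
    using inj_frobenius[OF prime_CHAR_finite_field[where 'a='a], of i] CHAR_eq by (simp add: inj_on_def)
qed simp

end

lemma subfield_pk_mult: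
  "(x::'a::{field,finite}) \<in> subfield_pk p k \<Longrightarrow> y \<in> subfield_pk p k \<Longrightarrow> x * y \<in> subfield_pk p k"
  by (simp add: subfield_pk_def power_mult_distrib)

lemma subfield_pk_divide:
  "(x::'a::{field,finite}) \<in> subfield_pk p k \<Longrightarrow> y \<in> subfield_pk p k \<Longrightarrow> x / y \<in> subfield_pk p k"
  by (simp add: subfield_pk_def power_divide)

lemma subfield_pk_power_power_eq:
  assumes "(x::'a::{field,finite}) \<in> subfield_pk p k"
  shows "x ^ (p ^ (k * j)) = x"
proof (induction j)
  case (Suc j)
  have "x ^ (p ^ (k * Suc j)) = (x ^ (p ^ (k * j))) ^ (p ^ k)"
    by (metis mult_Suc_right power_add power_mult mult.commute)
  with Suc assms show ?case by (simp add: subfield_pk_def)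
qed simp

lemma Fpk_linear_add_scale:
  fixes L :: "'a::{field,finite} \<Rightarrow> 'a"
  assumes "Fpk_linear p k r L" "CHAR('a) = p" "c \<in> subfield_pk p k"
  shows "L (x + c * y) = L x + c * L y"
proof -
  obtain lam :: "nat \<Rightarrow> 'a" where lam: "\<And>x. L x = (\<Sum>j<r. lam j * x ^ (p ^ (k * j)))"
    using assms(1) unfolding Fpk_linear_def by blast
  have "lam j * (x + c * y) ^ (p ^ (k * j))
        = lam j * x ^ (p ^ (k * j)) + c * (lam j * y ^ (p ^ (k * j)))" for j
  proof -
    have "(x + c * y) ^ (p ^ (k * j)) = x ^ (p ^ (k * j)) + c ^ (p ^ (k * j)) * y ^ (p ^ (k * j))"
      using freshmans_dream'[OF prime_CHAR_finite_field, of "p ^ (k * j)" "k * j" x "c * y"] assms(2)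
      by (simp add: power_mult_distrib)
    then show ?thesis
      using subfield_pk_power_power_eq[OF assms(3)] by (simp add: distrib_left mult.left_commute)
  qed
  then show ?thesis
    unfolding lam by (simp add: sum.distrib sum_distrib_left)
qed

lemma subfield_pk_frobenius_root:
  fixes h :: "'a::{field,finite} \<Rightarrow> 'a"
  assumes "CHAR('a) = p" "\<forall>u \<in> subfield_pk p k. h u \<in> subfield_pk p k"
  obtains \<psi> where "\<forall>u \<in> subfield_pk p k. \<psi> u \<in> subfield_pk p k \<and> \<psi> u ^ (p ^ i) = h u"
proof -
  have "\<forall>u \<in> subfield_pk p k. \<exists>c \<in> subfield_pk p k. c ^ (p ^ i) = h u"
    using frobenius_image_subfield_pk[OF assms(1), of i] assms(2) by (metis imageE)
  then show ?thesis using that by metis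
qed

lemma Fpk_linear_frobenius_add_scale:
  fixes L :: "'a::{field,finite} \<Rightarrow> 'a"
  assumes "Fpk_linear p k r L" "CHAR('a) = p" "c \<in> subfield_pk p k"
  shows "L (x + c * y) ^ (p ^ i) = L x ^ (p ^ i) + c ^ (p ^ i) * L y ^ (p ^ i)"
  using Fpk_linear_add_scale[OF assms] assms(2)
    freshmans_dream'[OF prime_CHAR_finite_field[where 'a='a], of "p ^ i" i]
  by (simp add: power_mult_distrib)

lemma frobenius_translator_shift:
  assumes "frobenius_translator p k f \<gamma> i b" "u \<in> subfield_pk p k"
  shows "f (x + u * \<gamma>) = f x + u ^ (p ^ i) * b"
  using assms unfolding frobenius_translator_def by (simp add: diff_eq_eq add.commute)

lemma frobenius_translator_image_line:
  fixes f :: "'a::{field,finite} \<Rightarrow> 'a"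
  assumes char: "CHAR('a) = p" and tr: "frobenius_translator p k f \<gamma> i b" and "b \<noteq> 0"
    and f_S: "\<forall>x. f x \<in> subfield_pk p k"
  shows "subfield_pk p k \<subseteq> (\<lambda>t. f (t * \<gamma>)) ` subfield_pk p k"
proof
  fix v :: 'a assume v: "v \<in> subfield_pk p k"
  have "b \<in> subfield_pk p k" using tr by (simp add: frobenius_translator_def)
  with v f_S have "(v - f 0) / b \<in> subfield_pk p k"
    by (intro subfield_pk_divide subfield_pk_diff[OF char]) auto
  then have "(v - f 0) / b \<in> (\<lambda>x. x ^ (p ^ i)) ` subfield_pk p k"
    by (simp only: frobenius_image_subfield_pk[OF char])
  then obtain t where t: "t \<in> subfield_pk p k" "(v - f 0) / b = t ^ (p ^ i)" by blast
  have "f (t * \<gamma>) = f 0 + t ^ (p ^ i) * b"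
    using frobenius_translator_shift[OF tr t(1), of 0] by simp
  also have "\<dots> = v" using t(2)[symmetric] \<open>b \<noteq> 0\<close> by simp
  finally show "v \<in> (\<lambda>t. f (t * \<gamma>)) ` subfield_pk p k" using t(1) by blast
qed

lemma inj_translator_shift_iff:
  fixes f \<psi> :: "'a::{field,finite} \<Rightarrow> 'a"
  assumes char: "CHAR('a) = p"
    and tr: "frobenius_translator p k f \<gamma> i b"
    and f_S: "\<forall>x. f x \<in> subfield_pk p k"
    and \<psi>_S: "\<forall>u \<in> subfield_pk p k. \<psi> u \<in> subfield_pk p k"
  shows "inj (\<lambda>x. x + \<psi> (f x) * \<gamma>)
         \<longleftrightarrow> bij_betw (\<lambda>u. u + b * \<psi> u ^ (p ^ i)) (subfield_pk p k) (subfield_pk p k)"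
    (is "inj ?F \<longleftrightarrow> bij_betw ?g ?S ?S")
proof -
  have f_F: "f (?F x) = ?g (f x)" for x
    using frobenius_translator_shift[OF tr, of "\<psi> (f x)" x] f_S \<psi>_S by (simp add: mult.commute)
  show ?thesis
  proof
    assume inj_F: "inj ?F"
    have "?g ` ?S \<subseteq> ?S"
      using \<psi>_S tr frobenius_image_subfield_pk[OF char, of i]
      by (auto intro!: subfield_pk_add[OF char] subfield_pk_mult simp: frobenius_translator_def)
    moreover have "?S \<subseteq> ?g ` ?S"
    proof (cases "b = 0")
      case False
      have "surj ?F" using finite_UNIV_inj_surj[OF finite_UNIV inj_F] .
      then have "range f = range (\<lambda>x. f (?F x))"
        using image_comp[of f ?F UNIV] by (simp add: comp_def)
      then have "(\<lambda>t. f (t * \<gamma>)) ` ?S \<subseteq> range (\<lambda>x. f (?F x))" by auto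
      also have "\<dots> \<subseteq> ?g ` ?S" using f_F f_S by auto
      finally show ?thesis using frobenius_translator_image_line[OF char tr False f_S] by blast
    qed simp
    ultimately show "bij_betw ?g ?S ?S"
      by (intro bij_betw_imageI finite_surj_inj) auto
  next
    assume "bij_betw ?g ?S ?S"
    then have inj_g: "inj_on ?g ?S" by (simp add: bij_betw_def)
    show "inj ?F"
    proof (rule injI)
      fix x y assume F_eq: "?F x = ?F y"
      then have "?g (f x) = ?g (f y)" using f_F by metis
      then have "f x = f y" using inj_onD[OF inj_g] f_S by blast
      with F_eq show "x = y" by simp
    qed
  qed
qed

theorem theorem3:
  fixes p r k i :: nat
    and f h L :: "'a::{field,finite} \<Rightarrow> 'a"
    and \<gamma> b :: 'a
  assumes "prime p"
    and "0 < r" and "0 < k"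
    and "card (UNIV :: 'a set) = p ^ (r * k)"
    and "\<forall>x. f x \<in> subfield_pk p k"
    and "\<forall>u \<in> subfield_pk p k. h u \<in> subfield_pk p k"
    and "frobenius_translator p k f \<gamma> i b"
    and "Fpk_linear p k r L"
    and "bij L"
  shows "bij (\<lambda>x. L x ^ (p ^ i) + L \<gamma> ^ (p ^ i) * h (f x))
         \<longleftrightarrow> bij_betw (\<lambda>u. u + b * h u) (subfield_pk p k) (subfield_pk p k)"
proof -
  have char: "CHAR('a) = p" using CHAR_eq_if_card_eq_prime_power assms(1,4) by blast
  obtain \<psi> where \<psi>: "\<forall>u \<in> subfield_pk p k. \<psi> u \<in> subfield_pk p k \<and> \<psi> u ^ (p ^ i) = h u"
    using subfield_pk_frobenius_root[OF char assms(6)] by blast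
  define F where "F x = x + \<psi> (f x) * \<gamma>" for x
  have "L x ^ (p ^ i) + L \<gamma> ^ (p ^ i) * h (f x) = L (F x) ^ (p ^ i)" for x
    using Fpk_linear_frobenius_add_scale[OF assms(8) char, of "\<psi> (f x)" x \<gamma> i] \<psi> assms(5)
    unfolding F_def by (simp add: mult.commute)
  then have "bij (\<lambda>x. L x ^ (p ^ i) + L \<gamma> ^ (p ^ i) * h (f x)) \<longleftrightarrow> inj F"
    using bij_comp_iff_inj[OF bij_comp[OF assms(9) bij_frobenius[where 'a='a, of i]]]
    by (simp add: char comp_def)
  also have "\<dots> \<longleftrightarrow> bij_betw (\<lambda>u. u + b * \<psi> u ^ (p ^ i)) (subfield_pk p k) (subfield_pk p k)"
    unfolding F_def using \<psi> by (intro inj_translator_shift_iff[OF char assms(7,5)]) blast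
  also have "\<dots> \<longleftrightarrow> bij_betw (\<lambda>u. u + b * h u) (subfield_pk p k) (subfield_pk p k)"
    using \<psi> by (intro bij_betw_cong) simp
  finally show ?thesis .
qed

end
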